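(* Let $N=[n]$, let $v:2^N\to\mathbb{R}_+$ be a monotone submodular valuation with $v(\emptyset)=0$, and let $X$ be a decision map for $v$. Let $p=(p_1,\dots,p_n)$ be a mixed Nash equilibrium of the pricing game defined by $v$ and $X$. Then for every $i$, $p_i\ge v(\{i\}\mid N\setminus\{i\})$ with probability $1$. Moreover, if $\mathbb{E}[u_i(p)]=0$, then $\Pr[v(\{i\}\mid X(p))>0]=0$.
   Context: Pricing game: $N=[n]$ services, service $i$ controlled by seller $i$. Buyer valuation $v:2^N\to\mathbb{R}_+$, monotone, $v(\emptyset)=0$; submodular means $v(S\cup T)+v(S\cap T)\le v(S)+v(T)$. Marginal value $v(T\mid S)=v(S\cup T)-v(S)$. For $p\in\mathbb{R}^n_+$, $p(S)=\sum_{j\in S}p_j$, $D(v;p)=\arg\max_{S\subseteq N}(v(S)-p(S))$. A decision map is $X:\mathbb{R}^n_+\to2^N$ with $X(p)\in D(v;p)$ for all $p$. Seller $i$'s utility is $u_i(p)=p_i\mathbf{1}\{i\in X(p)\}$. A mixed Nash equilibrium is a vector $p=(p_1,\dots,p_n)$ of independent random variables with values in $\mathbb{R}_+$ such that $\mathbb{E}[u_i(p_i,p_{-i})]\ge\mathbb{E}[u_i(p_i',p_{-i})]$ for every $i$ and every $p_i'\in\mathbb{R}_+$. *)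

theory Defs
  imports "HOL-Probability.Probability"
begin

text \<open>Services are indexed by N = {..<n} (0-based). Prices are functions nat => real;
  only their values on {..<n} matter.\<close>

definition monotone_val :: "nat \<Rightarrow> (nat set \<Rightarrow> real) \<Rightarrow> bool" where
  "monotone_val n v \<longleftrightarrow> (\<forall>S T. S \<subseteq> T \<and> T \<subseteq> {..<n} \<longrightarrow> v S \<le> v T)"

definition submodular_val :: "nat \<Rightarrow> (nat set \<Rightarrow> real) \<Rightarrow> bool" where
  "submodular_val n v \<longleftrightarrow>
     (\<forall>S T. S \<subseteq> {..<n} \<and> T \<subseteq> {..<n} \<longrightarrow> v (S \<union> T) + v (S \<inter> T) \<le> v S + v T)"

definition valuation :: "nat \<Rightarrow> (nat set \<Rightarrow> real) \<Rightarrow> bool" where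
  "valuation n v \<longleftrightarrow> (\<forall>S. S \<subseteq> {..<n} \<longrightarrow> 0 \<le> v S) \<and> v {} = 0"

definition marg :: "(nat set \<Rightarrow> real) \<Rightarrow> nat set \<Rightarrow> nat set \<Rightarrow> real" where
  "marg v T S = v (S \<union> T) - v S"

definition demand :: "nat \<Rightarrow> (nat set \<Rightarrow> real) \<Rightarrow> (nat \<Rightarrow> real) \<Rightarrow> nat set set" where
  "demand n v p = {S. S \<subseteq> {..<n} \<and>
     (\<forall>T. T \<subseteq> {..<n} \<longrightarrow> v T - sum p T \<le> v S - sum p S)}"

definition nonneg_prices :: "nat \<Rightarrow> (nat \<Rightarrow> real) \<Rightarrow> bool" where
  "nonneg_prices n p \<longleftrightarrow> (\<forall>i<n. 0 \<le> p i)"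

definition decision_map :: "nat \<Rightarrow> (nat set \<Rightarrow> real) \<Rightarrow> ((nat \<Rightarrow> real) \<Rightarrow> nat set) \<Rightarrow> bool" where
  "decision_map n v X \<longleftrightarrow> (\<forall>p. nonneg_prices n p \<longrightarrow> X p \<in> demand n v p)"

definition seller_util :: "((nat \<Rightarrow> real) \<Rightarrow> nat set) \<Rightarrow> nat \<Rightarrow> (nat \<Rightarrow> real) \<Rightarrow> real" where
  "seller_util X i p = (if i \<in> X p then p i else 0)"

definition joint :: "nat \<Rightarrow> (nat \<Rightarrow> real measure) \<Rightarrow> (nat \<Rightarrow> real) measure" where
  "joint n mu = PiM {..<n} mu"

text \<open>Mixed Nash equilibrium: independent prices (product law), each a probability
  distribution on the Borel reals concentrated on [0,\<infinity>); expected utilities are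
  well-defined (measurable utilities, which are bounded by v(N)), and no unilateral
  deviation to a deterministic price p_i' \<ge> 0 is profitable.\<close>
definition mixed_NE ::
  "nat \<Rightarrow> ((nat \<Rightarrow> real) \<Rightarrow> nat set) \<Rightarrow> (nat \<Rightarrow> real measure) \<Rightarrow> bool" where
  "mixed_NE n X mu \<longleftrightarrow>
     (\<forall>i<n. prob_space (mu i) \<and> sets (mu i) = sets borel \<and> (AE x in mu i. 0 \<le> x)) \<and>
     (\<forall>i<n. seller_util X i \<in> borel_measurable (joint n mu) \<and>
        (\<forall>x\<ge>0. (\<lambda>q. seller_util X i (q(i := x))) \<in> borel_measurable (joint n mu) \<and>
            (\<integral>q. seller_util X i (q(i := x)) \<partial>joint n mu)
              \<le> (\<integral>q. seller_util X i q \<partial>joint n mu)))"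

end

theory Submission imports Defs begin

text \<open>A seller pricing strictly below the buyer's marginal value for its service is always
  bought from: below \<open>v({i} | X(p))\<close> by comparing the two demanded bundles, and below
  \<open>v({i} | N - {i})\<close> by diminishing marginal values. So a deviation to a price
  \<open>y < v({i} | N - {i})\<close> earns exactly \<open>y\<close>, and the equilibrium payoff is at least
  \<open>v({i} | N - {i})\<close>. By Fubini over the independent prices, the equilibrium payoff is the
  average of the deviation payoffs over seller \<open>i\<close>'s own strategy, so almost every price in
  that strategy is a best response; none of them can lie below \<open>v({i} | N - {i})\<close>.
  If the equilibrium payoff is \<open>0\<close>, every positive (rational) deviation earns \<open>0\<close> almost
  surely, which is impossible wherever \<open>v({i} | X(p)) > 0\<close>.\<close>

lemma decision_map_subset:
  assumes "decision_map n v X" "nonneg_prices n p"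
  shows "X p \<subseteq> {..<n}"
  using assms unfolding decision_map_def demand_def by blast

lemma decision_map_optimal:
  assumes "decision_map n v X" "nonneg_prices n p" "T \<subseteq> {..<n}"
  shows "v T - sum p T \<le> v (X p) - sum p (X p)"
  using assms unfolding decision_map_def demand_def by blast

lemma nonneg_prices_fun_upd: "nonneg_prices n p \<Longrightarrow> 0 \<le> x \<Longrightarrow> nonneg_prices n (p(i := x))"
  unfolding nonneg_prices_def by auto

lemma marg_le_price_if_not_bought:
  assumes dm: "decision_map n v X" and p: "nonneg_prices n p" and i: "i < n" "i \<notin> X p"
  shows "marg v {i} (X p) \<le> p i"
proof -
  have S: "X p \<subseteq> {..<n}" using decision_map_subset[OF dm p] .
  then have "v (insert i (X p)) - sum p (insert i (X p)) \<le> v (X p) - sum p (X p)"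
    using decision_map_optimal[OF dm p] i by simp
  moreover have "sum p (insert i (X p)) = p i + sum p (X p)"
    using finite_subset[OF S finite_lessThan] i by simp
  ultimately show ?thesis unfolding marg_def by simp
qed

lemma submodular_marg_antimono:
  assumes sm: "submodular_val n v" and ST: "S \<subseteq> T" "T \<subseteq> {..<n}" and i: "i < n" "i \<notin> T"
  shows "marg v {i} T \<le> marg v {i} S"
proof -
  have "S \<union> {i} \<subseteq> {..<n}" using ST i by auto
  then have "v ((S \<union> {i}) \<union> T) + v ((S \<union> {i}) \<inter> T) \<le> v (S \<union> {i}) + v T"
    using sm ST unfolding submodular_val_def by blast
  moreover have "(S \<union> {i}) \<union> T = T \<union> {i}" "(S \<union> {i}) \<inter> T = S" using ST i by auto
  ultimately show ?thesis unfolding marg_def by simp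
qed

lemma bought_if_price_below_marg_top:
  assumes dm: "decision_map n v X" and sm: "submodular_val n v"
    and p: "nonneg_prices n p" and i: "i < n"
    and x: "0 \<le> x" "x < marg v {i} ({..<n} - {i})"
  shows "i \<in> X (p(i := x))"
proof (rule ccontr)
  let ?p = "p(i := x)"
  assume not_bought: "i \<notin> X ?p"
  have p': "nonneg_prices n ?p" using nonneg_prices_fun_upd[OF p x(1)] .
  have "marg v {i} ({..<n} - {i}) \<le> marg v {i} (X ?p)"
    using submodular_marg_antimono[OF sm, of "X ?p" "{..<n} - {i}"]
      decision_map_subset[OF dm p'] not_bought i by auto
  also have "\<dots> \<le> ?p i" using marg_le_price_if_not_bought[OF dm p' i not_bought] .
  finally show False using x(2) by simp
qed

lemma bought_if_price_below_marg:
  assumes dm: "decision_map n v X" and p: "nonneg_prices n p" and i: "i < n"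
    and x: "0 \<le> x" "x < marg v {i} (X p)"
  shows "i \<in> X (p(i := x))"
proof (rule ccontr)
  let ?p = "p(i := x)"
  assume not_bought: "i \<notin> X ?p"
  have p': "nonneg_prices n ?p" using nonneg_prices_fun_upd[OF p x(1)] .
  have not_in_bundle: "i \<notin> X p"
  proof
    assume "i \<in> X p"
    then have "marg v {i} (X p) = 0" unfolding marg_def by (simp add: insert_absorb)
    with x show False by simp
  qed
  have S': "X ?p \<subseteq> {..<n}" and S: "X p \<subseteq> {..<n}"
    using decision_map_subset[OF dm] p p' by blast+
  have "v (insert i (X p)) - sum ?p (insert i (X p)) \<le> v (X ?p) - sum ?p (X ?p)"
    using decision_map_optimal[OF dm p'] S i by simp
  moreover have "sum ?p (insert i (X p)) = x + sum p (X p)"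
  proof -
    have "sum ?p (insert i (X p)) = ?p i + sum ?p (X p)"
      using finite_subset[OF S finite_lessThan] not_in_bundle by (rule sum.insert)
    also have "sum ?p (X p) = sum p (X p)" using not_in_bundle by (auto intro!: sum.cong)
    finally show ?thesis by simp
  qed
  moreover have "sum ?p (X ?p) = sum p (X ?p)"
    using not_bought by (auto intro!: sum.cong)
  moreover have "v (X ?p) - sum p (X ?p) \<le> v (X p) - sum p (X p)"
    using decision_map_optimal[OF dm p S'] .
  ultimately have "marg v {i} (X p) \<le> x" unfolding marg_def by simp
  with x(2) show False by simp
qed

lemma seller_util_bounds:
  assumes val: "valuation n v" and mon: "monotone_val n v"
    and dm: "decision_map n v X" and p: "nonneg_prices n p"
  shows "0 \<le> seller_util X i p" and "seller_util X i p \<le> v {..<n}"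
proof -
  have S: "X p \<subseteq> {..<n}" using decision_map_subset[OF dm p] .
  have vN: "0 \<le> v {..<n}" using val unfolding valuation_def by simp
  show "0 \<le> seller_util X i p"
    using S p by (auto simp: seller_util_def nonneg_prices_def)
  show "seller_util X i p \<le> v {..<n}"
  proof (cases "i \<in> X p")
    case True
    have "v (X p - {i}) - sum p (X p - {i}) \<le> v (X p) - sum p (X p)"
      using decision_map_optimal[OF dm p] S by blast
    moreover have "sum p (X p) = p i + sum p (X p - {i})"
      using True S finite_subset by (metis finite_lessThan sum.remove)
    moreover have "0 \<le> v (X p - {i})" using val S unfolding valuation_def by blast
    moreover have "v (X p) \<le> v {..<n}" using mon S unfolding monotone_val_def by blast
    ultimately show ?thesis using True by (simp add: seller_util_def)
  qed (use vN in \<open>simp add: seller_util_def\<close>)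
qed

subsection \<open>Resampling one coordinate of a product of probability spaces\<close>

lemma integral_PiM_fun_upd:
  fixes M :: "'i \<Rightarrow> 'a measure" and f :: "('i \<Rightarrow> 'a) \<Rightarrow> real"
  assumes I: "finite I" "i \<in> I" and prob: "\<And>j. j \<in> I \<Longrightarrow> prob_space (M j)"
    and f[measurable]: "f \<in> borel_measurable (PiM I M)" and bound: "\<And>q. \<bar>f q\<bar> \<le> B"
  shows "integrable (M i) (\<lambda>y. \<integral>q. f (q(i := y)) \<partial>PiM I M)"
    and "(\<integral>q. f q \<partial>PiM I M) = (\<integral>y. (\<integral>q. f (q(i := y)) \<partial>PiM I M) \<partial>M i)"
proof -
  \<comment> \<open>\<open>product_sigma_finite\<close> needs a probability space at every index, not only on \<open>I\<close>.\<close>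
  define M' where "M' j = (if j \<in> I then M j else M i)" for j
  have prob': "prob_space (M' j)" for j using prob I(2) unfolding M'_def by auto
  interpret product_sigma_finite M'
    unfolding product_sigma_finite_def by (intro allI prob_space_imp_sigma_finite prob')
  define J where "J = I - {i}"
  have IJ: "I = insert i J" "finite J" "i \<notin> J" using I unfolding J_def by auto
  have M'i: "M' i = M i" using I(2) unfolding M'_def by simp
  have PiM_eq: "PiM I M = PiM (insert i J) M'"
    using IJ(1) by (intro PiM_cong) (auto simp: M'_def)
  interpret P: prob_space "PiM (insert i J) M'" by (intro prob_space_PiM prob')
  interpret PJ: pair_prob_space "PiM J M'" "M i"
    unfolding pair_prob_space_def pair_sigma_finite_def
    by (intro conjI prob_space_imp_sigma_finite prob_space_PiM prob I(2) prob')
  have f'[measurable]: "f \<in> borel_measurable (PiM (insert i J) M')" using f PiM_eq by simp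
  have f_int: "integrable (PiM (insert i J) M') f"
    by (rule P.integrable_const_bound[where B=B]) (use bound in auto)
  have upd_int: "integrable (PiM (insert i J) M') (\<lambda>q. f (q(i := y)))" if "y \<in> space (M i)" for y
  proof (rule P.integrable_const_bound[where B=B])
    have "(\<lambda>q. q(i := y)) \<in> PiM (insert i J) M' \<rightarrow>\<^sub>M PiM (insert i J) M'"
      using that M'i by (intro measurable_fun_upd[where J="insert i J"]) auto
    then show "(\<lambda>q. f (q(i := y))) \<in> borel_measurable (PiM (insert i J) M')" by measurable
  qed (use bound in auto)
  define G where "G y = (\<integral>x. f (x(i := y)) \<partial>PiM J M')" for y
  have G_eq: "G y = (\<integral>q. f (q(i := y)) \<partial>PiM I M)" if "y \<in> space (M i)" for y
  proof -
    have "(\<integral>q. f (q(i := y)) \<partial>PiM (insert i J) M')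
        = (\<integral>x. (\<integral>z. f ((x(i := z))(i := y)) \<partial>M' i) \<partial>PiM J M')"
      by (rule product_integral_insert[OF IJ(2,3) upd_int[OF that]])
    also have "\<dots> = G y" unfolding G_def using prob_space.prob_space[OF prob'] by simp
    finally show ?thesis using PiM_eq by simp
  qed
  have upd_meas: "(\<lambda>(x, y). f (x(i := y))) \<in> borel_measurable (PiM J M' \<Otimes>\<^sub>M M i)"
    using measurable_compose[OF measurable_add_dim f'] M'i by (simp add: case_prod_beta')
  have pair_int: "integrable (PiM J M' \<Otimes>\<^sub>M M i) (\<lambda>(x, y). f (x(i := y)))"
    by (rule PJ.P.integrable_const_bound[where B=B]) (use upd_meas bound in \<open>auto simp: split_beta\<close>)
  have "integrable (M i) G" unfolding G_def using PJ.integrable_snd[OF pair_int] by simp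
  then show "integrable (M i) (\<lambda>y. \<integral>q. f (q(i := y)) \<partial>PiM I M)"
    using G_eq by (simp cong: Bochner_Integration.integrable_cong)
  have "(\<integral>q. f q \<partial>PiM I M) = (\<integral>x. (\<integral>y. f (x(i := y)) \<partial>M' i) \<partial>PiM J M')"
    unfolding PiM_eq by (rule product_integral_insert[OF IJ(2,3) f_int])
  also have "\<dots> = (\<integral>y. G y \<partial>M i)"
    unfolding G_def M'i using PJ.Fubini_integral[OF pair_int] by simp
  also have "\<dots> = (\<integral>y. (\<integral>q. f (q(i := y)) \<partial>PiM I M) \<partial>M i)"
    by (rule Bochner_Integration.integral_cong[OF refl G_eq])
  finally show "(\<integral>q. f q \<partial>PiM I M) = (\<integral>y. (\<integral>q. f (q(i := y)) \<partial>PiM I M) \<partial>M i)" .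
qed

lemma (in prob_space) AE_eq_if_AE_le_integral_eq:
  fixes g :: "'a \<Rightarrow> real"
  assumes int: "integrable M g" and le: "AE x in M. g x \<le> c" and eq: "(\<integral>x. g x \<partial>M) = c"
  shows "AE x in M. g x = c"
proof -
  have diff_int: "integrable M (\<lambda>x. c - g x)" using int by simp
  have "(\<integral>x. c - g x \<partial>M) = 0" using int eq prob_space by simp
  moreover have "AE x in M. 0 \<le> c - g x" using le by eventually_elim simp
  ultimately have "AE x in M. c - g x = 0"
    using integral_nonneg_eq_0_iff_AE[OF diff_int] by blast
  then show ?thesis by eventually_elim simp
qed

lemma
  assumes "mixed_NE n X mu" "i < n"
  shows mixed_NE_prob_space: "prob_space (mu i)"
    and mixed_NE_AE_nonneg: "AE x in mu i. 0 \<le> x"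
    and mixed_NE_util_measurable: "seller_util X i \<in> borel_measurable (joint n mu)"
  using assms unfolding mixed_NE_def by blast+

lemma
  assumes "mixed_NE n X mu" "i < n" "0 \<le> x"
  shows mixed_NE_deviation_measurable:
      "(\<lambda>q. seller_util X i (q(i := x))) \<in> borel_measurable (joint n mu)"
    and mixed_NE_deviation_le:
      "(\<integral>q. seller_util X i (q(i := x)) \<partial>joint n mu) \<le> (\<integral>q. seller_util X i q \<partial>joint n mu)"
  using assms unfolding mixed_NE_def by blast+

lemma mixed_NE_prob_space_joint: "mixed_NE n X mu \<Longrightarrow> prob_space (joint n mu)"
  unfolding joint_def by (intro prob_space_PiM mixed_NE_prob_space) auto

lemma mixed_NE_AE_nonneg_prices:
  assumes NE: "mixed_NE n X mu"
  shows "AE q in joint n mu. nonneg_prices n q"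
proof -
  have "prob_space (mu j)" "AE x in mu j. 0 \<le> x" if "j < n" for j
    using mixed_NE_prob_space[OF NE that] mixed_NE_AE_nonneg[OF NE that] .
  then have "AE q in joint n mu. \<forall>j\<in>{..<n}. 0 \<le> q j"
    unfolding joint_def by (subst AE_finite_all) (auto intro!: AE_PiM_component)
  then show ?thesis unfolding nonneg_prices_def by auto
qed

lemma mixed_NE_expected_util_average:
  assumes val: "valuation n v" and mon: "monotone_val n v" and dm: "decision_map n v X"
    and NE: "mixed_NE n X mu" and i: "i < n"
  obtains G where "integrable (mu i) G"
    and "(\<integral>q. seller_util X i q \<partial>joint n mu) = (\<integral>y. G y \<partial>mu i)"
    and "\<And>y. 0 \<le> y \<Longrightarrow> G y = (\<integral>q. seller_util X i (q(i := y)) \<partial>joint n mu)"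
proof -
  let ?u = "seller_util X i" and ?P = "joint n mu"
  note prob = mixed_NE_prob_space[OF NE]
    and u_meas[measurable] = mixed_NE_util_measurable[OF NE i]
  have AE_prices: "AE q in ?P. nonneg_prices n q" by (rule mixed_NE_AE_nonneg_prices[OF NE])
  define B where "B = v {..<n}"
  have "0 \<le> B" using val unfolding valuation_def B_def by simp
  text \<open>The payoff is bounded only for nonnegative prices, i.e.\ almost surely; clipping it
    to \<open>[0, v N]\<close> gives an everywhere bounded version for Fubini.\<close>
  define w where "w q = max 0 (min B (?u q))" for q
  have u_eq_w: "?u q = w q" if "nonneg_prices n q" for q
    using seller_util_bounds[OF val mon dm that] unfolding w_def B_def by simp
  have w_meas: "w \<in> borel_measurable (PiM {..<n} mu)"
    unfolding w_def using u_meas unfolding joint_def by measurable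
  have w_bound: "\<bar>w q\<bar> \<le> B" for q using \<open>0 \<le> B\<close> unfolding w_def by simp
  define G where "G y = (\<integral>q. w (q(i := y)) \<partial>?P)" for y
  show ?thesis
  proof
    show "integrable (mu i) G"
      unfolding G_def joint_def using prob i
      by (intro integral_PiM_fun_upd(1)[OF finite_lessThan _ _ w_meas w_bound]) auto
    have "(\<integral>q. ?u q \<partial>?P) = (\<integral>q. w q \<partial>?P)"
      using AE_prices u_eq_w u_meas w_meas by (intro integral_cong_AE) (auto simp: joint_def)
    also have "\<dots> = (\<integral>y. G y \<partial>mu i)"
      unfolding G_def joint_def using prob i
      by (intro integral_PiM_fun_upd(2)[OF finite_lessThan _ _ w_meas w_bound]) auto
    finally show "(\<integral>q. ?u q \<partial>?P) = (\<integral>y. G y \<partial>mu i)" .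
  next
    fix y :: real assume y: "0 \<le> y"
    show "G y = (\<integral>q. ?u (q(i := y)) \<partial>?P)"
      unfolding G_def
    proof (rule integral_cong_AE)
      show dev_meas: "(\<lambda>q. ?u (q(i := y))) \<in> borel_measurable ?P"
        using mixed_NE_deviation_measurable[OF NE i y] .
      then show "(\<lambda>q. w (q(i := y))) \<in> borel_measurable ?P" unfolding w_def by measurable
      show "AE q in ?P. w (q(i := y)) = ?u (q(i := y))"
        using AE_prices by eventually_elim (intro u_eq_w[symmetric] nonneg_prices_fun_upd y)
    qed
  qed
qed

lemma mixed_NE_AE_best_response:
  assumes val: "valuation n v" and mon: "monotone_val n v" and dm: "decision_map n v X"
    and NE: "mixed_NE n X mu" and i: "i < n"
  shows "AE y in mu i. (\<integral>q. seller_util X i (q(i := y)) \<partial>joint n mu)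
                       = (\<integral>q. seller_util X i q \<partial>joint n mu)"
proof -
  define Z where "Z = (\<integral>q. seller_util X i q \<partial>joint n mu)"
  define dev where "dev y = (\<integral>q. seller_util X i (q(i := y)) \<partial>joint n mu)" for y
  obtain G where G_int: "integrable (mu i) G" and Z_eq: "Z = (\<integral>y. G y \<partial>mu i)"
    and G_dev: "\<And>y. 0 \<le> y \<Longrightarrow> G y = dev y"
    using mixed_NE_expected_util_average[OF val mon dm NE i, folded Z_def dev_def] by blast
  have dev_le: "\<And>y. 0 \<le> y \<Longrightarrow> dev y \<le> Z"
    using mixed_NE_deviation_le[OF NE i] unfolding dev_def Z_def .
  interpret mu_i: prob_space "mu i" by (rule mixed_NE_prob_space[OF NE i])
  note AE_nonneg = mixed_NE_AE_nonneg[OF NE i]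
  have "AE y in mu i. G y \<le> Z"
    using AE_nonneg by eventually_elim (use dev_le G_dev in auto)
  then have "AE y in mu i. G y = Z"
    using mu_i.AE_eq_if_AE_le_integral_eq G_int Z_eq by simp
  with AE_nonneg have "AE y in mu i. dev y = Z"
    by eventually_elim (use G_dev in auto)
  then show ?thesis unfolding dev_def Z_def .
qed

lemma mixed_NE_deviation_below_marg_top:
  assumes dm: "decision_map n v X" and sm: "submodular_val n v"
    and NE: "mixed_NE n X mu" and i: "i < n"
    and y: "0 \<le> y" "y < marg v {i} ({..<n} - {i})"
  shows "(\<integral>q. seller_util X i (q(i := y)) \<partial>joint n mu) = y"
proof -
  interpret P: prob_space "joint n mu" by (rule mixed_NE_prob_space_joint[OF NE])
  have "(\<integral>q. seller_util X i (q(i := y)) \<partial>joint n mu) = (\<integral>q. y \<partial>joint n mu)"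
  proof (rule integral_cong_AE)
    show "(\<lambda>q. seller_util X i (q(i := y))) \<in> borel_measurable (joint n mu)"
      using mixed_NE_deviation_measurable[OF NE i y(1)] .
    show "AE q in joint n mu. seller_util X i (q(i := y)) = y"
      using mixed_NE_AE_nonneg_prices[OF NE]
      by eventually_elim (simp add: seller_util_def bought_if_price_below_marg_top[OF dm sm _ i y])
  qed simp
  then show ?thesis by (simp add: P.prob_space)
qed

lemma mixed_NE_AE_price_ge_marg_top:
  assumes val: "valuation n v" and mon: "monotone_val n v" and sm: "submodular_val n v"
    and dm: "decision_map n v X" and NE: "mixed_NE n X mu" and i: "i < n"
  shows "AE y in mu i. marg v {i} ({..<n} - {i}) \<le> y"
proof -
  define m where "m = marg v {i} ({..<n} - {i})"
  define Z where "Z = (\<integral>q. seller_util X i q \<partial>joint n mu)"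
  define dev where "dev y = (\<integral>q. seller_util X i (q(i := y)) \<partial>joint n mu)" for y
  have dev_le: "\<And>y. 0 \<le> y \<Longrightarrow> dev y \<le> Z"
    using mixed_NE_deviation_le[OF NE i] unfolding dev_def Z_def .
  have dev_below: "dev y = y" if "0 \<le> y" "y < m" for y
    using mixed_NE_deviation_below_marg_top[OF dm sm NE i that[unfolded m_def]]
    unfolding dev_def .
  have m_le_Z: "m \<le> Z" if "0 < m"
    using that
  proof (rule dense_le_bounded)
    fix w assume "0 < w" "w < m"
    then show "w \<le> Z" using dev_le[of w] dev_below[of w] by simp
  qed
  have "AE y in mu i. dev y = Z"
    using mixed_NE_AE_best_response[OF val mon dm NE i] unfolding dev_def Z_def .
  with mixed_NE_AE_nonneg[OF NE i] show ?thesis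
    unfolding m_def[symmetric]
  proof eventually_elim
    case (elim y)
    show "m \<le> y"
    proof (rule ccontr)
      assume "\<not> m \<le> y"
      then have "dev y = y" "0 < m" using dev_below elim(1) by auto
      then show False using m_le_Z elim \<open>\<not> m \<le> y\<close> by simp
    qed
  qed
qed

lemma mixed_NE_AE_deviation_zero:
  assumes NE: "mixed_NE n X mu" and i: "i < n"
    and zero: "(\<integral>q. seller_util X i q \<partial>joint n mu) = 0" and y: "0 \<le> y"
  shows "AE q in joint n mu. seller_util X i (q(i := y)) = 0"
proof -
  interpret P: prob_space "joint n mu" by (rule mixed_NE_prob_space_joint[OF NE])
  have nonneg: "0 \<le> seller_util X i (q(i := y))" for q
    using y by (simp add: seller_util_def)
  have int: "integrable (joint n mu) (\<lambda>q. seller_util X i (q(i := y)))"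
    by (rule P.integrable_const_bound[where B=y, OF _ mixed_NE_deviation_measurable[OF NE i y]])
      (use y in \<open>simp add: seller_util_def\<close>)
  have "(\<integral>q. seller_util X i (q(i := y)) \<partial>joint n mu) \<le> 0"
    using mixed_NE_deviation_le[OF NE i y] zero by simp
  moreover have "0 \<le> (\<integral>q. seller_util X i (q(i := y)) \<partial>joint n mu)"
    using nonneg by (simp add: Bochner_Integration.integral_nonneg)
  ultimately show ?thesis
    using integral_nonneg_eq_0_iff_AE[OF int] nonneg by simp
qed

lemma mixed_NE_AE_no_positive_marg:
  assumes dm: "decision_map n v X" and NE: "mixed_NE n X mu" and i: "i < n"
    and zero: "(\<integral>q. seller_util X i q \<partial>joint n mu) = 0"
  shows "AE q in joint n mu. \<not> marg v {i} (X q) > 0"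
proof -
  note dev_zero = mixed_NE_AE_deviation_zero[OF NE i zero]
  have "AE q in joint n mu. 0 < r \<longrightarrow> seller_util X i (q(i := of_rat r)) = 0" for r :: rat
  proof (cases "0 < r")
    case True
    then show ?thesis using dev_zero[of "of_rat r"] by simp
  qed simp
  then have AE_rat:
      "AE q in joint n mu. \<forall>r::rat. 0 < r \<longrightarrow> seller_util X i (q(i := of_rat r)) = 0"
    unfolding AE_all_countable by (rule allI)
  have no_pos: "\<not> marg v {i} (X q) > 0"
    if q: "nonneg_prices n q"
      and zero_rat: "\<forall>r::rat. 0 < r \<longrightarrow> seller_util X i (q(i := of_rat r)) = 0"
    for q
  proof
    assume "0 < marg v {i} (X q)"
    from of_rat_dense[OF this] obtain r :: rat
      where r: "0 < real_of_rat r" "real_of_rat r < marg v {i} (X q)"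
      by blast
    then have "i \<in> X (q(i := of_rat r))"
      using bought_if_price_below_marg[OF dm q i] by simp
    then have "seller_util X i (q(i := of_rat r)) = of_rat r" by (simp add: seller_util_def)
    moreover have "seller_util X i (q(i := of_rat r)) = 0" using zero_rat r(1) by simp
    ultimately show False using r(1) by simp
  qed
  show ?thesis by (rule eventually_elim2[OF mixed_NE_AE_nonneg_prices[OF NE] AE_rat no_pos])
qed

theorem mainTheorem7:
  fixes n :: nat and v :: "nat set \<Rightarrow> real"
    and X :: "(nat \<Rightarrow> real) \<Rightarrow> nat set" and mu :: "nat \<Rightarrow> real measure"
  assumes "valuation n v" and "monotone_val n v" and "submodular_val n v"
    and "decision_map n v X"
    and "mixed_NE n X mu"
  shows "\<forall>i<n. (AE x in mu i. marg v {i} ({..<n} - {i}) \<le> x) \<and>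
           ((\<integral>q. seller_util X i q \<partial>joint n mu) = 0 \<longrightarrow>
              (AE q in joint n mu. \<not> (marg v {i} (X q) > 0)))"
proof (intro allI impI conjI)
  fix i assume i: "i < n"
  show "AE x in mu i. marg v {i} ({..<n} - {i}) \<le> x"
    using mixed_NE_AE_price_ge_marg_top[OF assms i] .
  assume "(\<integral>q. seller_util X i q \<partial>joint n mu) = 0"
  then show "AE q in joint n mu. \<not> marg v {i} (X q) > 0"
    by (rule mixed_NE_AE_no_positive_marg[OF assms(4,5) i])
qed

end
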